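(* Let $X$ be a real random variable with $\mathbb{E}[e^X]=1$ and cumulative distribution function $F$, and assume there exists $\epsilon>0$ with $\mathbb{E}[e^{-\epsilon X}]<\infty$. For $k>0$ let $p(-k)=\int_{-\infty}^{-k}(e^{-k}-e^x)\,dF(x)$ and let $V(-k)$ be the implied volatility at log-strike $-k$, i.e. the unique value with $p_{BS}(-k,V(-k))=p(-k)$. If $k\mapsto-\log p(-k)$ is regularly varying, then as $k\to\infty$ $$\frac{V(-k)^2}{k}\sim\psi\!\left(-1+\frac{-\log p(-k)}{k}\right).$$
   Context: With $\Phi$ the standard normal distribution function and $d_{1,2}(x,\sigma)=-x/\sigma\pm\sigma/2$, $p_{BS}(x,\sigma)=e^x\Phi(-d_2)-\Phi(-d_1)$ is the normalized Black–Scholes put price at log-strike $x$ and total volatility $\sigma$. $\psi:[0,\infty]\to[0,2]$, $\psi[x]=2-4\left(\sqrt{x^2+x}-x\right)$. A measurable function $g$, positive for large $x$, is regularly varying if there is $\alpha\in\mathbb{R}$ with $\lim_{x\to\infty}g(\lambda x)/g(x)=\lambda^\alpha$ for all $\lambda>0$. $g\sim h$ means $g(k)/h(k)\to1$ as $k\to\infty$. *)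

theory Defs
  imports "HOL-Probability.Probability"
begin

definition Phi :: "real \<Rightarrow> real" where
  "Phi x = measure (density lborel std_normal_density) {..x}"

definition d1 :: "real \<Rightarrow> real \<Rightarrow> real" where
  "d1 x \<sigma> = - x / \<sigma> + \<sigma> / 2"

definition d2 :: "real \<Rightarrow> real \<Rightarrow> real" where
  "d2 x \<sigma> = - x / \<sigma> - \<sigma> / 2"

text \<open>Normalized Black--Scholes put price at log-strike x, total volatility sigma.\<close>
definition p_BS :: "real \<Rightarrow> real \<Rightarrow> real" where
  "p_BS x \<sigma> = exp x * Phi (- d2 x \<sigma>) - Phi (- d1 x \<sigma>)"

definition implied_vol :: "real \<Rightarrow> real \<Rightarrow> real" where
  "implied_vol x p = (THE \<sigma>. \<sigma> > 0 \<and> p_BS x \<sigma> = p)"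

definition psi :: "real \<Rightarrow> real" where
  "psi x = 2 - 4 * (sqrt (x\<^sup>2 + x) - x)"

definition regularly_varying :: "(real \<Rightarrow> real) \<Rightarrow> bool" where
  "regularly_varying g \<longleftrightarrow> g \<in> borel_measurable borel \<and>
     (\<forall>\<^sub>F x in at_top. g x > 0) \<and>
     (\<exists>\<alpha>::real. \<forall>c>0. ((\<lambda>x. g (c * x) / g x) \<longlongrightarrow> c powr \<alpha>) at_top)"

end

theory Submission
  imports Defs "HOL-Real_Asymp.Real_Asymp"
begin

text \<open>Write \<open>\<sigma> = V(-k)\<close>, \<open>L = - log p(-k)\<close>, \<open>d\<^sub>1 = k/\<sigma> + \<sigma>/2\<close>, \<open>d\<^sub>2 = k/\<sigma> - \<sigma>/2\<close>, so that
  \<open>d\<^sub>1\<^sup>2 - d\<^sub>2\<^sup>2 = 2k\<close> and \<open>\<sigma> = 2k/(d\<^sub>1 + d\<^sub>2)\<close>. The moment condition gives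
  \<open>p(-k) \<le> C exp (-(1 + \<epsilon>)k)\<close>; for large \<open>k\<close> this is below the Black--Scholes price at the
  volatility where \<open>d\<^sub>2 = 1\<close>, hence \<open>d\<^sub>2 > 1\<close>. The Mills-ratio bound and a mean-value estimate then
  give \<open>d\<^sub>1\<^sup>2 \<le> 2L \<le> d\<^sub>1\<^sup>2 + 6d\<^sub>1 + 5\<close>, and with \<open>d\<^sub>2\<^sup>2 = d\<^sub>1\<^sup>2 - 2k\<close> both \<open>d\<^sub>1\<close> and \<open>d\<^sub>2\<close> are close to
  \<open>\<surd>(2L)\<close> and \<open>\<surd>(2L - 2k)\<close>, with relative error \<open>O(\<surd>L / (L - k))\<close>. Since
  \<open>\<psi>(-1 + L/k) = 4k / (\<surd>(2L) + \<surd>(2L - 2k))\<^sup>2\<close>, the ratio in the theorem is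
  \<open>((\<surd>(2L) + \<surd>(2L - 2k)) / (d\<^sub>1 + d\<^sub>2))\<^sup>2\<close>, and the error vanishes because
  \<open>L - k \<ge> (\<epsilon>L - log C)/(1 + \<epsilon>) \<rightarrow> \<infinity>\<close>.\<close>

section \<open>The standard normal distribution\<close>

abbreviation std_normal :: "real measure" where
  "std_normal \<equiv> density lborel std_normal_density"

lemma real_distribution_std_normal: "real_distribution std_normal"
proof -
  interpret prob_space std_normal by (rule prob_space_normal_density) simp
  show ?thesis by unfold_locales simp
qed

interpretation std_normal: real_distribution std_normal
  by (rule real_distribution_std_normal)

lemma Phi_eq_cdf: "Phi = cdf std_normal"
  by (auto simp: Phi_def cdf_def fun_eq_iff)

lemma std_normal_density_pos: "std_normal_density x > 0"
  by (simp add: std_normal_density_def)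

lemma std_normal_density_minus: "std_normal_density (- x) = std_normal_density x"
  by (simp add: std_normal_density_def)

lemma std_normal_density_le_exp: "std_normal_density x \<le> exp (- x\<^sup>2 / 2)"
proof -
  have "1 \<le> sqrt (2 * pi)" using pi_gt3 by (simp add: real_le_rsqrt)
  then show ?thesis unfolding std_normal_density_def
    by (simp add: divide_le_eq mult_le_cancel_right1)
qed

lemma std_normal_density_antimono:
  "0 \<le> a \<Longrightarrow> a \<le> b \<Longrightarrow> std_normal_density b \<le> std_normal_density a"
  unfolding std_normal_density_def by (intro mult_left_mono) (auto simp: power_mono)

lemma has_real_derivative_std_normal_density:
  "(std_normal_density has_real_derivative - t * std_normal_density t) (at t)"
proof -
  define c :: real where "c = 1 / sqrt (2 * pi)"
  have "((\<lambda>t. c * exp (- t\<^sup>2 / 2)) has_real_derivative c * (exp (- t\<^sup>2 / 2) * (- (2 * t) / 2))) (at t)"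
    by (auto intro!: derivative_eq_intros)
  then show ?thesis unfolding std_normal_density_def[abs_def] c_def by (simp add: algebra_simps)
qed

lemma measure_std_normal_singleton: "measure std_normal {a} = 0"
proof -
  have "emeasure std_normal {a} = (\<integral>\<^sup>+ x. ennreal (std_normal_density x) * indicator {a} x \<partial>lborel)"
    by (rule emeasure_density) auto
  also have "\<dots> = (\<integral>\<^sup>+ x. ennreal (std_normal_density a) * indicator {a} x \<partial>lborel)"
    by (intro nn_integral_cong) (auto split: split_indicator)
  finally show ?thesis by (simp add: measure_def)
qed

lemma Phi_diff_eq_integral:
  assumes "x \<le> y"
  shows "Phi y - Phi x = integral {x..y} std_normal_density"
proof -
  have "continuous_on {x..y} std_normal_density"
    unfolding std_normal_density_def by (intro continuous_intros) auto
  then have integrable: "std_normal_density integrable_on {x..y}"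
    by (rule integrable_continuous_real)
  then have hi: "(std_normal_density has_integral integral {x..y} std_normal_density) {x..y}"
    by (simp add: has_integral_integral)
  have nonneg: "0 \<le> integral {x..y} std_normal_density"
    by (rule integral_nonneg[OF integrable]) simp
  have "emeasure std_normal {x..y}
      = (\<integral>\<^sup>+ t. ennreal (std_normal_density t) * indicator {x..y} t \<partial>lborel)"
    by (rule emeasure_density) auto
  also have "\<dots> = ennreal (integral {x..y} std_normal_density)"
    by (rule nn_integral_has_integral_lebesgue'[OF _ hi]) (simp add: normal_density_nonneg)
  finally have closed: "measure std_normal {x..y} = integral {x..y} std_normal_density"
    using nonneg by (simp add: measure_def)
  show ?thesis
  proof (cases "x = y")
    case False
    then have "x < y" using assms by simp
    have "measure std_normal ({x} \<union> {x<..y}) = measure std_normal {x} + measure std_normal {x<..y}"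
      by (rule std_normal.finite_measure_Union) auto
    moreover have "{x} \<union> {x<..y} = {x..y}" using \<open>x < y\<close> by auto
    ultimately have "measure std_normal {x..y} = measure std_normal {x} + measure std_normal {x<..y}"
      by simp
    then show ?thesis
      using std_normal.cdf_diff_eq[OF \<open>x < y\<close>] closed measure_std_normal_singleton
      by (simp add: Phi_eq_cdf)
  qed simp
qed

lemma has_real_derivative_Phi: "(Phi has_real_derivative std_normal_density x) (at x)"
proof -
  let ?a = "x - 1" and ?b = "x + 1"
  have "continuous_on {?a..?b} std_normal_density"
    unfolding std_normal_density_def by (intro continuous_intros) auto
  then have "((\<lambda>u. integral {?a..u} std_normal_density) has_real_derivative
      std_normal_density x) (at x within {?a..?b})"
    by (rule integral_has_real_derivative) auto
  then have "((\<lambda>u. Phi ?a + integral {?a..u} std_normal_density) has_real_derivative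
      std_normal_density x) (at x within {?a..?b})"
    using DERIV_add[OF DERIV_const] by fastforce
  then have "((\<lambda>u. Phi ?a + integral {?a..u} std_normal_density) has_real_derivative
      std_normal_density x) (at x)"
    by (subst (asm) at_within_interior) (auto simp: interior_atLeastAtMost_real)
  then show ?thesis
  proof (rule has_field_derivative_transform_within_open[of _ _ _ "{?a<..<?b}"])
    fix u assume "u \<in> {?a<..<?b}"
    then show "Phi ?a + integral {?a..u} std_normal_density = Phi u"
      using Phi_diff_eq_integral[of ?a u] by simp
  qed auto
qed

lemma has_real_derivative_Phi_compose [derivative_intros]:
  "(f has_real_derivative f') (at x within S) \<Longrightarrow>
   ((\<lambda>x. Phi (f x)) has_real_derivative std_normal_density (f x) * f') (at x within S)"
  using DERIV_chain2[OF has_real_derivative_Phi] by blast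

lemma Phi_nonneg: "0 \<le> Phi x"
  unfolding Phi_eq_cdf by (rule std_normal.cdf_nonneg)

lemma Phi_strict_mono: "x < y \<Longrightarrow> Phi x < Phi y"
  by (rule DERIV_pos_imp_increasing[of x y Phi])
     (auto intro!: exI[of _ "std_normal_density _"] has_real_derivative_Phi std_normal_density_pos)

lemma Phi_minus_tendsto_0: "((\<lambda>t. Phi (- t)) \<longlongrightarrow> 0) at_top"
  by (rule filterlim_compose[OF _ filterlim_uminus_at_bot_at_top])
     (simp add: Phi_eq_cdf std_normal.cdf_lim_at_bot)

text \<open>\<open>\<phi>(t)/t - \<Phi>(-t)\<close> decreases to \<open>0\<close>, its derivative being \<open>-\<phi>(t)/t\<^sup>2\<close>.\<close>
lemma Phi_minus_le_Mills_ratio: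
  assumes "d > 0"
  shows "Phi (- d) \<le> std_normal_density d / d"
proof -
  define h where "h t = std_normal_density t / t - Phi (- t)" for t
  have h_deriv: "(h has_real_derivative - std_normal_density t / t\<^sup>2) (at t)" if "t > 0" for t
  proof -
    have "(h has_real_derivative (- t * std_normal_density t * t - std_normal_density t * 1) / (t * t)
             - std_normal_density (- t) * (- 1)) (at t)"
      unfolding h_def using that
      by (auto intro!: derivative_eq_intros has_real_derivative_std_normal_density)
    then show ?thesis
      using that by (simp add: std_normal_density_minus field_simps power2_eq_square)
  qed
  have h_lim: "(h \<longlongrightarrow> 0) at_top"
  proof -
    have "((\<lambda>t. std_normal_density t / t) \<longlongrightarrow> 0) at_top"
      unfolding std_normal_density_def by real_asymp
    then show ?thesis unfolding h_def using tendsto_diff[OF _ Phi_minus_tendsto_0] by fastforce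
  qed
  have "0 < h d"
  proof (rule DERIV_neg_imp_decreasing_at_top[OF _ h_lim])
    fix t assume "d \<le> t"
    then show "\<exists>y. (h has_real_derivative y) (at t) \<and> y < 0"
      using assms h_deriv[of t] std_normal_density_pos[of t] by (intro exI conjI) auto
  qed
  then show ?thesis unfolding h_def by simp
qed

section \<open>The Black--Scholes put price\<close>

lemma d1_eq_d2_plus: "d1 x \<sigma> = d2 x \<sigma> + \<sigma>"
  by (simp add: d1_def d2_def)

lemma exp_mult_std_normal_density_d2:
  assumes "\<sigma> \<noteq> 0"
  shows "exp x * std_normal_density (d2 x \<sigma>) = std_normal_density (d1 x \<sigma>)"
proof -
  have "x + - (d2 x \<sigma>)\<^sup>2 / 2 = - (d1 x \<sigma>)\<^sup>2 / 2"
    using assms unfolding d1_def d2_def by (simp add: field_simps power2_eq_square)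
  then have "exp x * exp (- (d2 x \<sigma>)\<^sup>2 / 2) = exp (- (d1 x \<sigma>)\<^sup>2 / 2)"
    by (metis exp_add)
  then show ?thesis unfolding std_normal_density_def by (simp add: algebra_simps)
qed

lemma p_BS_vega:
  assumes "\<sigma> > 0"
  shows "(p_BS x has_real_derivative std_normal_density (d1 x \<sigma>)) (at \<sigma>)"
proof -
  have "(p_BS x has_real_derivative
      exp x * (std_normal_density (- d2 x \<sigma>) * (- x / \<sigma>\<^sup>2 + 1/2))
      - std_normal_density (- d1 x \<sigma>) * (- x / \<sigma>\<^sup>2 - 1/2)) (at \<sigma>)"
    unfolding p_BS_def[abs_def] d1_def d2_def using assms
    by (auto intro!: derivative_eq_intros simp: power2_eq_square field_simps)
  moreover have "exp x * (std_normal_density (- d2 x \<sigma>) * (- x / \<sigma>\<^sup>2 + 1/2))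
      - std_normal_density (- d1 x \<sigma>) * (- x / \<sigma>\<^sup>2 - 1/2) = std_normal_density (d1 x \<sigma>)"
    using exp_mult_std_normal_density_d2[of \<sigma> x] assms
    by (simp add: std_normal_density_minus algebra_simps)
  ultimately show ?thesis by simp
qed

lemma p_BS_strict_mono:
  assumes "0 < s" "s < t"
  shows "p_BS x s < p_BS x t"
  by (rule DERIV_pos_imp_increasing[OF assms(2)])
     (use assms in \<open>auto intro!: exI p_BS_vega std_normal_density_pos\<close>)

lemma continuous_on_p_BS: "0 < a \<Longrightarrow> continuous_on {a..b} (p_BS x)"
  by (rule DERIV_atLeastAtMost_imp_continuous_on) (auto intro!: exI p_BS_vega)

lemma p_BS_tendsto_0:
  assumes "k > 0"
  shows "(p_BS (- k) \<longlongrightarrow> 0) (at_right 0)"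
proof -
  have "filterlim (\<lambda>s. k / s + c * s) at_top (at_right 0)" for c
  proof -
    have "filterlim (\<lambda>s. k * inverse s) at_top (at_right 0)"
      using assms by (auto intro!: filterlim_tendsto_pos_mult_at_top filterlim_inverse_at_top_right)
    then have "filterlim (\<lambda>s. c * s + k * inverse s) at_top (at_right 0)"
      by (rule filterlim_tendsto_add_at_top[rotated]) (auto intro!: tendsto_eq_intros)
    then show ?thesis by (simp add: field_simps add.commute)
  qed
  then have "((\<lambda>s. Phi (- (k / s + c * s))) \<longlongrightarrow> 0) (at_right 0)" for c
    by (rule filterlim_compose[OF Phi_minus_tendsto_0])
  from tendsto_diff[OF tendsto_mult_right_zero[OF this[of "- 1/2"], of "exp (- k)"] this[of "1/2"]]
  show ?thesis unfolding p_BS_def[abs_def] d1_def d2_def by simp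
qed

lemma p_BS_pos:
  assumes "k > 0" "\<sigma> > 0"
  shows "0 < p_BS (- k) \<sigma>"
proof -
  have half: "0 < \<sigma> / 2" using assms by simp
  have "\<forall>\<^sub>F t in at_right 0. p_BS (- k) t \<le> p_BS (- k) (\<sigma> / 2)"
    using eventually_at_right_real[OF half]
    by eventually_elim (intro less_imp_le p_BS_strict_mono, auto)
  then have "0 \<le> p_BS (- k) (\<sigma> / 2)"
    using tendsto_upperbound[OF p_BS_tendsto_0[OF assms(1)]] by simp
  also have "\<dots> < p_BS (- k) \<sigma>"
    using assms by (intro p_BS_strict_mono) auto
  finally show ?thesis .
qed

lemma p_BS_le_exp_neg_d1_sq:
  assumes "\<sigma> > 0" "1 \<le> d2 x \<sigma>"
  shows "p_BS x \<sigma> \<le> exp (- (d1 x \<sigma>)\<^sup>2 / 2)"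
proof -
  let ?a = "d2 x \<sigma>"
  have "p_BS x \<sigma> \<le> exp x * Phi (- ?a)"
    unfolding p_BS_def using Phi_nonneg by simp
  also have "\<dots> \<le> exp x * (std_normal_density ?a / ?a)"
    using Phi_minus_le_Mills_ratio[of ?a] assms by (intro mult_left_mono) auto
  also have "\<dots> \<le> exp x * std_normal_density ?a"
    using assms std_normal_density_pos[of ?a] by (simp add: divide_le_eq)
  also have "\<dots> = std_normal_density (d1 x \<sigma>)"
    using exp_mult_std_normal_density_d2[of \<sigma> x] assms by simp
  also have "\<dots> \<le> exp (- (d1 x \<sigma>)\<^sup>2 / 2)"
    by (rule std_normal_density_le_exp)
  finally show ?thesis .
qed

text \<open>Mean value theorem on \<open>[\<sigma> d/(d+1), \<sigma>]\<close> with \<open>d = d\<^sub>1\<close>: on that interval \<open>d\<^sub>1 \<le> d + 1\<close>.\<close>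
lemma p_BS_ge:
  assumes "k > 0" "\<sigma> > 0"
  shows "\<sigma> / (d1 (- k) \<sigma> + 1) * std_normal_density (d1 (- k) \<sigma> + 1) \<le> p_BS (- k) \<sigma>"
proof -
  define d where "d = d1 (- k) \<sigma>"
  have d_pos: "d > 0" unfolding d_def d1_def using assms by (simp add: add_pos_pos)
  define s where "s = \<sigma> * d / (d + 1)"
  have s: "0 < s" "s < \<sigma>" unfolding s_def using d_pos assms by (auto simp: field_simps)
  have "(p_BS (- k) has_real_derivative std_normal_density (d1 (- k) z)) (at z)"
    if "s \<le> z" "z \<le> \<sigma>" for z
    using that s by (intro p_BS_vega) auto
  from MVT2[OF s(2) this] obtain z where z: "s < z" "z < \<sigma>"
    and mvt: "p_BS (- k) \<sigma> - p_BS (- k) s = (\<sigma> - s) * std_normal_density (d1 (- k) z)"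
    by blast
  have "d1 (- k) z \<le> k / s + \<sigma> / 2 * ((d + 1) / d)"
  proof -
    have "k / z \<le> k / s" using z s assms by (intro divide_left_mono) auto
    moreover have "z / 2 \<le> \<sigma> / 2 * ((d + 1) / d)"
    proof -
      have "z / 2 \<le> \<sigma> / 2" using z by simp
      also have "\<dots> \<le> \<sigma> / 2 * ((d + 1) / d)" using d_pos assms by (simp add: field_simps)
      finally show ?thesis .
    qed
    ultimately show ?thesis by (simp add: d1_def)
  qed
  also have "\<dots> = (k / \<sigma> + \<sigma> / 2) * ((d + 1) / d)"
    unfolding s_def using d_pos assms by (simp add: field_simps)
  also have "\<dots> = d + 1"
    using d_pos by (simp add: d_def d1_def)
  finally have "std_normal_density (d + 1) \<le> std_normal_density (d1 (- k) z)"
    using z s assms by (intro std_normal_density_antimono) (auto simp: d1_def)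
  moreover have "\<sigma> - s = \<sigma> / (d + 1)" unfolding s_def using d_pos by (simp add: field_simps)
  moreover have "0 < p_BS (- k) s" using p_BS_pos assms s by simp
  ultimately show ?thesis using mvt assms d_pos unfolding d_def[symmetric]
    by (smt (verit) divide_pos_pos mult_left_mono)
qed

section \<open>Implied volatility of small prices\<close>

lemma d2_strict_antimono:
  assumes "k > 0" "0 < s" "s < t"
  shows "d2 (- k) t < d2 (- k) s"
proof -
  have "k / t < k / s" using assms by (simp add: divide_strict_left_mono)
  then show ?thesis unfolding d2_def using assms by simp
qed

lemma implied_vol_eqI:
  assumes "\<sigma> > 0" "p_BS x \<sigma> = q"
  shows "implied_vol x q = \<sigma>"
  unfolding implied_vol_def
proof (rule the_equality)
  fix \<tau> assume "\<tau> > 0 \<and> p_BS x \<tau> = q"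
  then show "\<tau> = \<sigma>"
    using assms p_BS_strict_mono[of \<tau> \<sigma> x] p_BS_strict_mono[of \<sigma> \<tau> x]
    by (cases \<tau> \<sigma> rule: linorder_cases) auto
qed (use assms in simp)

lemma implied_vol_less:
  assumes "k > 0" "0 < q" "s > 0" "q < p_BS (- k) s"
  shows "0 < implied_vol (- k) q" "implied_vol (- k) q < s"
    and "p_BS (- k) (implied_vol (- k) q) = q"
proof -
  have "\<forall>\<^sub>F r in at_right 0. p_BS (- k) r < q \<and> r \<in> {0<..<s}"
    using order_tendstoD(2)[OF p_BS_tendsto_0[OF assms(1)] assms(2)]
      eventually_at_right_real[OF assms(3)]
    by (rule eventually_conj)
  then obtain r where r: "p_BS (- k) r < q" "0 < r" "r < s"
    using eventually_happens'[OF trivial_limit_at_right_real] by fastforce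
  obtain \<sigma> where \<sigma>: "r \<le> \<sigma>" "\<sigma> \<le> s" "p_BS (- k) \<sigma> = q"
    using IVT'[of "p_BS (- k)" r q s] r assms(4) continuous_on_p_BS[of r s "- k"] by auto
  moreover have "\<sigma> \<noteq> s" using \<sigma> assms(4) by auto
  moreover have "implied_vol (- k) q = \<sigma>"
    using \<sigma> r by (intro implied_vol_eqI) auto
  ultimately show "0 < implied_vol (- k) q" "implied_vol (- k) q < s"
    and "p_BS (- k) (implied_vol (- k) q) = q"
    using r by auto
qed

definition unit_d2_vol :: "real \<Rightarrow> real" where
  "unit_d2_vol k = sqrt (1 + 2 * k) - 1"

lemma unit_d2_vol:
  assumes "k > 0"
  shows "unit_d2_vol k > 0" "d2 (- k) (unit_d2_vol k) = 1"
    and "d1 (- k) (unit_d2_vol k) = sqrt (1 + 2 * k)"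
proof -
  let ?s = "unit_d2_vol k"
  show pos: "?s > 0" unfolding unit_d2_vol_def using assms by (simp add: real_less_rsqrt)
  have "(?s + 1)\<^sup>2 = 1 + 2 * k" unfolding unit_d2_vol_def using assms by simp
  then have "2 * k = ?s\<^sup>2 + 2 * ?s" by (simp add: power2_eq_square algebra_simps)
  then show d2: "d2 (- k) ?s = 1"
    using pos unfolding d2_def by (simp add: field_simps power2_eq_square)
  show "d1 (- k) ?s = sqrt (1 + 2 * k)"
    unfolding d1_eq_d2_plus d2 by (simp add: unit_d2_vol_def)
qed

lemma p_BS_unit_d2_vol_ge:
  assumes "k > 0"
  shows "exp (- k) * (Phi (- 1) - 1 / sqrt (1 + 2 * k)) \<le> p_BS (- k) (unit_d2_vol k)"
proof -
  let ?r = "sqrt (1 + 2 * k)"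
  note unit = unit_d2_vol[OF assms]
  have r_pos: "?r > 0" using assms by simp
  have "Phi (- ?r) \<le> std_normal_density ?r / ?r"
    using Phi_minus_le_Mills_ratio[OF r_pos] .
  also have "std_normal_density ?r = exp (- k) * std_normal_density 1"
    using exp_mult_std_normal_density_d2[of "unit_d2_vol k" "- k"] unit by simp
  also have "\<dots> \<le> exp (- k)"
  proof -
    have "std_normal_density 1 \<le> 1"
      using std_normal_density_le_exp[of 1] by (rule order_trans) simp
    then show ?thesis by (simp add: mult_left_le)
  qed
  finally have "Phi (- ?r) \<le> exp (- k) / ?r"
    using r_pos by (simp add: divide_right_mono)
  moreover have "p_BS (- k) (unit_d2_vol k) = exp (- k) * Phi (- 1) - Phi (- ?r)"
    unfolding p_BS_def using unit by simp
  ultimately show ?thesis by (simp add: algebra_simps)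
qed

lemma implied_vol_small_price:
  assumes "k > 0" "0 < q" "q < exp (- k) * (Phi (- 1) - 1 / sqrt (1 + 2 * k))"
  shows "0 < implied_vol (- k) q" "1 < d2 (- k) (implied_vol (- k) q)"
    and "p_BS (- k) (implied_vol (- k) q) = q"
proof -
  note unit = unit_d2_vol[OF assms(1)]
  have "q < p_BS (- k) (unit_d2_vol k)"
    using assms(3) p_BS_unit_d2_vol_ge[OF assms(1)] by simp
  note less = implied_vol_less[OF assms(1,2) unit(1) this]
  show "0 < implied_vol (- k) q" "p_BS (- k) (implied_vol (- k) q) = q"
    by (fact less)+
  show "1 < d2 (- k) (implied_vol (- k) q)"
    using d2_strict_antimono[OF assms(1) less(1,2)] unit(2) by simp
qed

section \<open>Asymptotics of the implied volatility\<close>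

lemma d1_sq_le_neg_ln_p_BS:
  assumes "k > 0" "\<sigma> > 0" "1 \<le> d2 (- k) \<sigma>"
  shows "(d1 (- k) \<sigma>)\<^sup>2 \<le> - 2 * ln (p_BS (- k) \<sigma>)"
proof -
  have "ln (p_BS (- k) \<sigma>) \<le> ln (exp (- (d1 (- k) \<sigma>)\<^sup>2 / 2))"
    using p_BS_le_exp_neg_d1_sq[OF assms(2,3)] p_BS_pos[OF assms(1,2)]
    by (subst ln_le_cancel_iff) auto
  then show ?thesis by simp
qed

lemma neg_ln_p_BS_le:
  assumes "k \<ge> 1" "\<sigma> > 0"
  shows "- 2 * ln (p_BS (- k) \<sigma>) \<le> (d1 (- k) \<sigma>)\<^sup>2 + 6 * d1 (- k) \<sigma> + 5"
proof -
  define a where "a = d1 (- k) \<sigma>"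
  have a_eq: "a = k / \<sigma> + \<sigma> / 2" unfolding a_def d1_def by simp
  have a_pos: "a > 0" unfolding a_eq using assms by (simp add: add_pos_pos)
  have "ln (\<sigma> / (a + 1) * std_normal_density (a + 1)) \<le> ln (p_BS (- k) \<sigma>)"
    using p_BS_ge[of k \<sigma>] p_BS_pos[of k \<sigma>] assms a_pos std_normal_density_pos[of "a + 1"]
    unfolding a_def[symmetric] by (subst ln_le_cancel_iff) auto
  moreover have "ln (\<sigma> / (a + 1) * std_normal_density (a + 1))
      = ln \<sigma> - ln (a + 1) - ln (sqrt (2 * pi)) - (a + 1)\<^sup>2 / 2"
    unfolding std_normal_density_def using assms a_pos by (simp add: ln_mult ln_div)
  moreover have "- ln \<sigma> \<le> ln (a + 1)"
  proof -
    have "1 / \<sigma> \<le> k / \<sigma>" using assms by (simp add: divide_right_mono)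
    also have "\<dots> \<le> a + 1" unfolding a_eq using assms by simp
    finally have "1 / \<sigma> \<le> a + 1" .
    then have "ln (1 / \<sigma>) \<le> ln (a + 1)" using assms a_pos by (subst ln_le_cancel_iff) auto
    then show ?thesis using assms by (simp add: ln_div)
  qed
  moreover have "ln (a + 1) \<le> a"
    using ln_add_one_self_le_self[of a] a_pos by (simp add: add.commute)
  moreover have "ln (sqrt (2 * pi)) \<le> 2"
  proof -
    have "sqrt (2 * pi) \<le> 3" using pi_less_4 by (simp add: real_sqrt_le_iff real_le_lsqrt)
    also have "3 \<le> exp (2::real)" using exp_ge_add_one_self[of 2] by simp
    finally have "ln (sqrt (2 * pi)) \<le> ln (exp 2)" by (subst ln_le_cancel_iff) auto
    then show ?thesis by simp
  qed
  moreover have "(a + 1)\<^sup>2 = a\<^sup>2 + 2 * a + 1" by (simp add: power2_eq_square algebra_simps)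
  ultimately show ?thesis unfolding a_def[symmetric] by linarith
qed

lemma psi_eq_sqrt_sum:
  assumes "0 < k" "k \<le> L"
  shows "psi (- 1 + L / k) = 4 * k / (sqrt (2 * L) + sqrt (2 * L - 2 * k))\<^sup>2"
proof -
  define W where "W = sqrt (L * (L - k))"
  have W2: "W\<^sup>2 = L * (L - k)" unfolding W_def using assms by simp
  have "(- 1 + L / k)\<^sup>2 + (- 1 + L / k) = L * (L - k) / k\<^sup>2"
    using assms by (simp add: field_simps power2_eq_square)
  then have "sqrt ((- 1 + L / k)\<^sup>2 + (- 1 + L / k)) = W / k"
    unfolding W_def using assms by (simp add: real_sqrt_divide)
  then have psi: "psi (- 1 + L / k) = (4 * L - 2 * k - 4 * W) / k"
    unfolding psi_def using assms by (simp add: field_simps)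
  have "sqrt (2 * L) * sqrt (2 * L - 2 * k) = sqrt (4 * (L * (L - k)))"
    by (simp add: real_sqrt_mult[symmetric] algebra_simps)
  also have "\<dots> = 2 * W" unfolding W_def by (simp add: real_sqrt_mult)
  finally have N2: "(sqrt (2 * L) + sqrt (2 * L - 2 * k))\<^sup>2 = 4 * L - 2 * k + 4 * W"
    using assms by (simp add: power2_sum)
  have "(4 * L - 2 * k - 4 * W) * (4 * L - 2 * k + 4 * W) = 4 * k * k"
    using W2 by (simp add: power2_eq_square algebra_simps)
  moreover have "4 * L - 2 * k + 4 * W > 0"
    using assms by (simp add: W_def add_pos_nonneg)
  ultimately have "4 * L - 2 * k - 4 * W = 4 * k * k / (4 * L - 2 * k + 4 * W)"
    by (simp add: eq_divide_eq)
  then show ?thesis unfolding psi N2 using assms by simp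
qed

text \<open>If two pairs \<open>a \<le> A\<close>, \<open>b \<le> B\<close> have the same gap of squares \<open>\<delta>\<close>, both gaps \<open>A - a\<close>, \<open>B - b\<close>
  are at most \<open>\<delta> / B\<close>.\<close>
lemma sum_div_sum_ge:
  fixes a b A B \<delta> :: real
  assumes "0 < B" "B \<le> A" "0 \<le> a" "a \<le> A" "0 \<le> b" "b \<le> B"
    and "A\<^sup>2 - a\<^sup>2 = B\<^sup>2 - b\<^sup>2" "A\<^sup>2 - a\<^sup>2 \<le> \<delta>"
  shows "1 - 2 * \<delta> / B\<^sup>2 \<le> (a + b) / (A + B)"
proof -
  have gap: "u - v \<le> \<delta> / B" if "0 \<le> v" "v \<le> u" "B \<le> u" "u\<^sup>2 - v\<^sup>2 \<le> \<delta>" for u v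
  proof -
    have "(u - v) * B \<le> (u - v) * (u + v)"
      using that by (intro mult_left_mono) auto
    also have "\<dots> \<le> \<delta>" using that by (simp add: power2_eq_square algebra_simps)
    finally show ?thesis using assms(1) by (simp add: le_divide_eq)
  qed
  have "(A + B) - (a + b) \<le> 2 * \<delta> / B"
    using gap[of a A] gap[of b B] assms by simp
  then have "((A + B) - (a + b)) / (A + B) \<le> 2 * \<delta> / B / (A + B)"
    using assms by (intro divide_right_mono) auto
  moreover have "1 - (a + b) / (A + B) = ((A + B) - (a + b)) / (A + B)"
    using assms by (simp add: field_simps)
  ultimately have "1 - (a + b) / (A + B) \<le> 2 * \<delta> / B / (A + B)" by simp
  also have "\<dots> \<le> 2 * \<delta> / B / B"
  proof (rule divide_left_mono)
    have "0 \<le> A\<^sup>2 - a\<^sup>2" using assms by (simp add: power_mono)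
    then have "0 \<le> \<delta>" using assms by linarith
    then show "0 \<le> 2 * \<delta> / B" using assms by simp
  qed (use assms in auto)
  finally show ?thesis by (simp add: power2_eq_square)
qed

text \<open>\<open>\<rho> = (d\<^sub>1 + d\<^sub>2) / (\<surd>(2L) + \<surd>(2L - 2k))\<close>, since \<open>d\<^sub>1 + d\<^sub>2 = 2k/\<sigma>\<close>.\<close>
lemma implied_vol_psi_ratio:
  assumes "k \<ge> 1" "0 < q" "q < exp (- k) * (Phi (- 1) - 1 / sqrt (1 + 2 * k))"
  defines "\<sigma> \<equiv> implied_vol (- k) q" and "L \<equiv> - ln q"
  defines "\<rho> \<equiv> 2 * k / (\<sigma> * (sqrt (2 * L) + sqrt (2 * L - 2 * k)))"
  shows "1 - (6 * sqrt (2 * L) + 5) / (L - k) \<le> \<rho>" "\<rho> \<le> 1"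
    and "\<sigma>\<^sup>2 / k / psi (- 1 + L / k) = 1 / \<rho>\<^sup>2"
proof -
  have k_pos: "k > 0" using assms(1) by simp
  note implied = implied_vol_small_price[OF k_pos assms(2,3), folded \<sigma>_def]
  define a where "a = d1 (- k) \<sigma>"
  define b where "b = d2 (- k) \<sigma>"
  define A where "A = sqrt (2 * L)"
  define B where "B = sqrt (2 * L - 2 * k)"
  have a_pos: "a > 0" and b_gt_1: "b > 1"
    using implied(1,2) unfolding a_def b_def d1_eq_d2_plus by auto
  have sq_gap: "a\<^sup>2 - b\<^sup>2 = 2 * k" and sum: "a + b = 2 * k / \<sigma>"
    using implied(1) unfolding a_def b_def d1_def d2_def by (auto simp: power2_eq_square field_simps)
  have a_sq_le: "a\<^sup>2 \<le> 2 * L"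
    using d1_sq_le_neg_ln_p_BS[OF k_pos implied(1)] implied(2,3)
    unfolding a_def L_def by simp
  have L_le: "2 * L \<le> a\<^sup>2 + 6 * a + 5"
    using neg_ln_p_BS_le[OF assms(1) implied(1)] implied(3) unfolding a_def L_def by simp
  have "0 < b\<^sup>2" using b_gt_1 by simp
  then have "k < L" using sq_gap a_sq_le by linarith
  then have B_pos: "B > 0" and B_le_A: "B \<le> A" unfolding A_def B_def using k_pos by auto
  have a_le_A: "a \<le> A" unfolding A_def using a_sq_le a_pos by (simp add: real_le_rsqrt)
  have b_le_B: "b \<le> B" unfolding B_def using a_sq_le sq_gap b_gt_1 by (simp add: real_le_rsqrt)
  have A_sq: "A\<^sup>2 = 2 * L" and B_sq: "B\<^sup>2 = 2 * (L - k)"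
    unfolding A_def B_def using \<open>k < L\<close> k_pos by auto
  have \<rho>_eq: "\<rho> = (a + b) / (A + B)"
    unfolding \<rho>_def sum A_def B_def using implied(1) by simp
  have "1 - 2 * (6 * A + 5) / B\<^sup>2 \<le> (a + b) / (A + B)"
    using B_pos B_le_A a_pos a_le_A b_gt_1 b_le_B A_sq B_sq sq_gap L_le
    by (intro sum_div_sum_ge) auto
  moreover have "2 * (6 * A + 5) / B\<^sup>2 = (6 * sqrt (2 * L) + 5) / (L - k)"
    unfolding B_sq A_def by (rule mult_divide_mult_cancel_left) simp
  ultimately show "1 - (6 * sqrt (2 * L) + 5) / (L - k) \<le> \<rho>"
    unfolding \<rho>_eq by linarith
  show "\<rho> \<le> 1" unfolding \<rho>_eq using a_le_A b_le_B B_pos B_le_A by simp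
  have N_pos: "A + B > 0" using B_pos B_le_A by simp
  have "psi (- 1 + L / k) = 4 * k / (A + B)\<^sup>2"
    unfolding A_def B_def using psi_eq_sqrt_sum k_pos \<open>k < L\<close> by simp
  moreover have "\<rho> = 2 * k / (\<sigma> * (A + B))" unfolding \<rho>_def A_def B_def ..
  ultimately show "\<sigma>\<^sup>2 / k / psi (- 1 + L / k) = 1 / \<rho>\<^sup>2"
    using k_pos implied(1) N_pos by (simp add: field_simps power2_eq_square)
qed

lemma relative_gap_tendsto_0:
  fixes L :: "real \<Rightarrow> real"
  assumes "e > 0" "filterlim L at_top at_top" "\<forall>\<^sub>F k in at_top. (1 + e) * k - c \<le> L k"
  shows "((\<lambda>k. (6 * sqrt (2 * L k) + 5) / (L k - k)) \<longlongrightarrow> 0) at_top"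
proof (rule tendsto_sandwich[of "\<lambda>_. 0"])
  have "((\<lambda>L. (1 + e) * (6 * sqrt (2 * L) + 5) / (e * L - c)) \<longlongrightarrow> 0) at_top"
    using assms(1) by real_asymp
  then show "((\<lambda>k. (1 + e) * (6 * sqrt (2 * L k) + 5) / (e * L k - c)) \<longlongrightarrow> 0) at_top"
    using assms(2) by (rule filterlim_compose)
  have "\<forall>\<^sub>F k in at_top. max 0 (c / e) < L k"
    using assms(2) unfolding filterlim_at_top_dense by blast
  with assms(3) have bounds: "\<forall>\<^sub>F k in at_top. 0 \<le> L k \<and> k < L k \<and> 0 < e * L k - c \<and>
      e * L k - c \<le> (1 + e) * (L k - k)"
  proof eventually_elim
    case (elim k)
    then have "c / e < L k" by simp
    then have "0 < e * L k - c" using assms(1) by (simp add: divide_less_eq mult.commute)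
    moreover have "e * L k - c \<le> (1 + e) * (L k - k)"
      using elim by (simp add: algebra_simps)
    ultimately have "0 < (1 + e) * (L k - k)" by linarith
    then have "k < L k" using assms(1) by (simp add: zero_less_mult_iff)
    with elim \<open>0 < e * L k - c\<close> \<open>e * L k - c \<le> _\<close> show ?case by simp
  qed
  from bounds show "\<forall>\<^sub>F k in at_top. (6 * sqrt (2 * L k) + 5) / (L k - k)
      \<le> (1 + e) * (6 * sqrt (2 * L k) + 5) / (e * L k - c)"
  proof eventually_elim
    case (elim k)
    have "(6 * sqrt (2 * L k) + 5) / (L k - k)
        = (1 + e) * (6 * sqrt (2 * L k) + 5) / ((1 + e) * (L k - k))"
      using assms(1) by simp
    also have "\<dots> \<le> (1 + e) * (6 * sqrt (2 * L k) + 5) / (e * L k - c)"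
      using elim assms(1) by (intro divide_left_mono mult_pos_pos) auto
    finally show ?case .
  qed
  from bounds show "\<forall>\<^sub>F k in at_top. 0 \<le> (6 * sqrt (2 * L k) + 5) / (L k - k)"
    by eventually_elim (use assms(1) in \<open>auto intro!: divide_nonneg_pos\<close>)
qed simp

lemma eventually_less_unit_d2_price:
  fixes q :: "real \<Rightarrow> real"
  assumes "\<epsilon> > 0" and q_le: "\<forall>\<^sub>F k in at_top. q k \<le> C * exp (- (1 + \<epsilon>) * k)"
  shows "\<forall>\<^sub>F k in at_top. q k < exp (- k) * (Phi (- 1) - 1 / sqrt (1 + 2 * k))"
proof -
  have "((\<lambda>k. C * exp (- \<epsilon> * k) + 1 / sqrt (1 + 2 * k)) \<longlongrightarrow> 0) at_top"
    using assms(1) by real_asymp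
  moreover have "0 < Phi (- 1)"
    using Phi_strict_mono[of "- 2" "- 1"] Phi_nonneg[of "- 2"] by simp
  ultimately have "\<forall>\<^sub>F k in at_top. C * exp (- \<epsilon> * k) + 1 / sqrt (1 + 2 * k) < Phi (- 1)"
    by (rule order_tendstoD)
  with q_le show ?thesis
  proof eventually_elim
    case (elim k)
    have split: "C * exp (- (1 + \<epsilon>) * k) = exp (- k) * (C * exp (- \<epsilon> * k))"
      by (simp add: algebra_simps flip: exp_add)
    have "q k \<le> exp (- k) * (C * exp (- \<epsilon> * k))"
      using elim(1) unfolding split .
    also have "\<dots> < exp (- k) * (Phi (- 1) - 1 / sqrt (1 + 2 * k))"
      using elim(2) by simp
    finally show ?case .
  qed
qed

lemma implied_vol_psi_asymptotics:
  fixes q :: "real \<Rightarrow> real"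
  assumes "\<epsilon> > 0" and q_pos: "\<forall>\<^sub>F k in at_top. 0 < q k"
    and q_le: "\<forall>\<^sub>F k in at_top. q k \<le> C * exp (- (1 + \<epsilon>) * k)"
  shows "((\<lambda>k. (implied_vol (- k) (q k))\<^sup>2 / k / psi (- 1 + (- ln (q k)) / k)) \<longlongrightarrow> 1) at_top"
proof -
  define L where "L k = - ln (q k)" for k
  define \<rho> where "\<rho> k = 2 * k / (implied_vol (- k) (q k) * (sqrt (2 * L k) + sqrt (2 * L k - 2 * k)))"
    for k
  obtain k0 where "0 < q k0" "q k0 \<le> C * exp (- (1 + \<epsilon>) * k0)"
    using eventually_happens'[OF _ eventually_conj[OF q_pos q_le]] by auto
  then have C_pos: "0 < C" by (metis exp_gt_zero order_less_le_trans zero_less_mult_pos2)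
  have L_ge: "\<forall>\<^sub>F k in at_top. (1 + \<epsilon>) * k - ln C \<le> L k"
    using q_pos q_le
  proof eventually_elim
    case (elim k)
    then have "ln (q k) \<le> ln (C * exp (- (1 + \<epsilon>) * k))" by simp
    then show ?case using C_pos by (simp add: L_def ln_mult algebra_simps)
  qed
  have "filterlim (\<lambda>k. (1 + \<epsilon>) * k - ln C) at_top at_top"
    using assms(1) by real_asymp
  then have L_top: "filterlim L at_top at_top"
    using L_ge by (rule filterlim_at_top_mono)
  have q_small: "\<forall>\<^sub>F k in at_top. q k < exp (- k) * (Phi (- 1) - 1 / sqrt (1 + 2 * k))"
    using assms(1) q_le by (rule eventually_less_unit_d2_price)
  have "\<forall>\<^sub>F k in at_top. 1 - (6 * sqrt (2 * L k) + 5) / (L k - k) \<le> \<rho> k \<and> \<rho> k \<le> 1 \<and>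
      (implied_vol (- k) (q k))\<^sup>2 / k / psi (- 1 + (- ln (q k)) / k) = 1 / (\<rho> k)\<^sup>2"
    using eventually_ge_at_top[of 1] q_pos q_small
  proof eventually_elim
    case (elim k)
    show ?case unfolding L_def \<rho>_def by (intro conjI implied_vol_psi_ratio[OF elim])
  qed
  then have ratio: "\<forall>\<^sub>F k in at_top. 1 - (6 * sqrt (2 * L k) + 5) / (L k - k) \<le> \<rho> k"
      "\<forall>\<^sub>F k in at_top. \<rho> k \<le> 1"
      "\<forall>\<^sub>F k in at_top. 1 / (\<rho> k)\<^sup>2 = (implied_vol (- k) (q k))\<^sup>2 / k / psi (- 1 + (- ln (q k)) / k)"
    by (auto elim: eventually_mono)
  have "((\<lambda>k. 1 - (6 * sqrt (2 * L k) + 5) / (L k - k)) \<longlongrightarrow> 1) at_top"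
    using tendsto_diff[OF tendsto_const relative_gap_tendsto_0[OF assms(1) L_top L_ge], of 1]
    by simp
  then have "(\<rho> \<longlongrightarrow> 1) at_top"
    by (rule tendsto_sandwich[OF ratio(1,2) _ tendsto_const])
  then have "((\<lambda>k. 1 / (\<rho> k)\<^sup>2) \<longlongrightarrow> 1) at_top"
    using tendsto_divide[OF tendsto_const tendsto_power[of \<rho> 1 at_top 2]] by simp
  then show ?thesis using ratio(3) by (rule Lim_transform_eventually)
qed

lemma (in prob_space) put_price_le_exp_moment:
  fixes X :: "'a \<Rightarrow> real"
  assumes [measurable]: "X \<in> borel_measurable M"
    and "\<epsilon> \<ge> 0" "integrable M (\<lambda>\<omega>. exp (- \<epsilon> * X \<omega>))"
  shows "expectation (\<lambda>\<omega>. indicator {..- k} (X \<omega>) * (exp (- k) - exp (X \<omega>)))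
    \<le> exp (- (1 + \<epsilon>) * k) * expectation (\<lambda>\<omega>. exp (- \<epsilon> * X \<omega>))"
proof -
  have "expectation (\<lambda>\<omega>. indicator {..- k} (X \<omega>) * (exp (- k) - exp (X \<omega>)))
      \<le> expectation (\<lambda>\<omega>. exp (- (1 + \<epsilon>) * k) * exp (- \<epsilon> * X \<omega>))"
  proof (rule integral_mono)
    show "integrable M (\<lambda>\<omega>. indicator {..- k} (X \<omega>) * (exp (- k) - exp (X \<omega>)))"
      by (rule integrable_const_bound[where B = "exp (- k)"]) (auto split: split_indicator)
    show "integrable M (\<lambda>\<omega>. exp (- (1 + \<epsilon>) * k) * exp (- \<epsilon> * X \<omega>))"
      using assms(3) by simp
    fix \<omega>
    have "indicator {..- k} (X \<omega>) * (exp (- k) - exp (X \<omega>)) \<le> exp (- (1 + \<epsilon>) * k + - \<epsilon> * X \<omega>)"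
    proof (cases "X \<omega> \<le> - k")
      case True
      then have "indicator {..- k} (X \<omega>) * (exp (- k) - exp (X \<omega>)) \<le> exp (- k)" by simp
      also have "\<dots> \<le> exp (- (1 + \<epsilon>) * k + - \<epsilon> * X \<omega>)"
        using True assms(2) mult_left_mono[of "X \<omega>" "- k" \<epsilon>] by (simp add: algebra_simps)
      finally show ?thesis .
    qed simp
    then show "indicator {..- k} (X \<omega>) * (exp (- k) - exp (X \<omega>))
        \<le> exp (- (1 + \<epsilon>) * k) * exp (- \<epsilon> * X \<omega>)"
      by (metis exp_add)
  qed
  then show ?thesis by simp
qed

theorem lemma6:
  fixes M :: "'a measure" and X :: "'a \<Rightarrow> real" and \<epsilon> :: real
    and p :: "real \<Rightarrow> real"
  assumes "prob_space M"
    and "X \<in> borel_measurable M"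
    and "integrable M (\<lambda>\<omega>. exp (X \<omega>))"
    and "prob_space.expectation M (\<lambda>\<omega>. exp (X \<omega>)) = 1"
    and "\<epsilon> > 0"
    and "integrable M (\<lambda>\<omega>. exp (- \<epsilon> * X \<omega>))"
    and p_def: "\<And>k. p k = prob_space.expectation M
                 (\<lambda>\<omega>. indicator {..k} (X \<omega>) * (exp k - exp (X \<omega>)))"
    and "regularly_varying (\<lambda>k. - ln (p (- k)))"
  shows "((\<lambda>k. (implied_vol (- k) (p (- k)))\<^sup>2 / k
              / psi (-1 + (- ln (p (- k))) / k)) \<longlongrightarrow> 1) at_top"
proof -
  interpret prob_space M by fact
  define C where "C = expectation (\<lambda>\<omega>. exp (- \<epsilon> * X \<omega>))"
  have "p (- k) \<le> C * exp (- (1 + \<epsilon>) * k)" for k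
    using put_price_le_exp_moment[OF assms(2) _ assms(6), of k] assms(5)
    unfolding p_def C_def by (simp add: mult.commute)
  moreover have "\<forall>\<^sub>F k in at_top. 0 < p (- k)"
    using assms(8) unfolding regularly_varying_def
  proof (elim conjE eventually_mono)
    fix k assume "- ln (p (- k)) > 0"
    then have "p (- k) \<noteq> 0" by auto
    moreover have "0 \<le> p (- k)"
      unfolding p_def by (rule integral_nonneg_AE) (auto split: split_indicator)
    ultimately show "0 < p (- k)" by simp
  qed
  ultimately show ?thesis
    using implied_vol_psi_asymptotics[OF assms(5), of "\<lambda>k. p (- k)" C] by simp
qed

end
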